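(* Assume $0<\alpha\le1$ and $E\in\mathrm{Swath}(\alpha)$. Let $X_E=X_E(\alpha)$ be the optimal solution of $\mathrm{QP}_E(\alpha)$. If $t=\tfrac12\alpha/\|X_E\|_E$, then $E(t)=\frac{1}{1+t}(E+tX_E)$ lies in $\mathrm{Swath}(\alpha)$.
   Context: $\mathbb{S}^n$ is the space of real symmetric $n\times n$ matrices, $\mathbb{S}^n_{++}$ the positive definite cone. Given $C,A_1,\ldots,A_m\in\mathbb{S}^n$ and $b\in\mathbb{R}^m$, let $\mathcal{A}(X)=(\mathrm{tr}(A_1X),\ldots,\mathrm{tr}(A_mX))$. Standing assumptions: the semidefinite program $\min \mathrm{tr}(CX)$ s.t. $\mathcal{A}(X)=b$, $X\succeq0$ and its dual $\max b^Ty$ s.t. $\sum_iy_iA_i+S=C$, $S\succeq0$ are both strictly feasible; $b\ne0$; $C$ is not a linear combination of the $A_i$; the $A_i$ are linearly independent. For $E\in\mathbb{S}^n_{++}$: $\|X\|_E=\mathrm{tr}((E^{-1}X)^2)^{1/2}$ and $K_E(\alpha)=\{X:\mathrm{tr}(E^{-1}X)\ge\alpha\|X\|_E\}$. $\mathrm{QP}_E(\alpha)$ is $\min\mathrm{tr}(CX)$ s.t. $\mathcal{A}(X)=b$, $X\in K_E(\alpha)$. $\mathrm{Swath}(\alpha)=\{E\in\mathbb{S}^n_{++}:\mathcal{A}(E)=b\text{ and }\mathrm{QP}_E(\alpha)\text{ has an optimal solution}\}$. *)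

theory Defs
  imports "HOL-Analysis.Analysis"
begin

definition sym_mat :: "real^'n^'n \<Rightarrow> bool" where
  "sym_mat X \<longleftrightarrow> transpose X = X"

definition pos_def :: "real^'n^'n \<Rightarrow> bool" where
  "pos_def E \<longleftrightarrow> sym_mat E \<and> (\<forall>x. x \<noteq> 0 \<longrightarrow> x \<bullet> (E *v x) > 0)"

definition Amap :: "('m \<Rightarrow> real^'n^'n) \<Rightarrow> real^'n^'n \<Rightarrow> real^'m" where
  "Amap A X = (\<chi> i. trace (A i ** X))"

definition normE :: "real^'n^'n \<Rightarrow> real^'n^'n \<Rightarrow> real" where
  "normE E X = sqrt (trace ((matrix_inv E ** X) ** (matrix_inv E ** X)))"

definition coneK :: "real^'n^'n \<Rightarrow> real \<Rightarrow> (real^'n^'n) set" where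
  "coneK E \<alpha> = {X. sym_mat X \<and> trace (matrix_inv E ** X) \<ge> \<alpha> * normE E X}"

definition QP_feasible :: "('m \<Rightarrow> real^'n^'n) \<Rightarrow> real^'m \<Rightarrow> real^'n^'n \<Rightarrow> real \<Rightarrow> real^'n^'n \<Rightarrow> bool" where
  "QP_feasible A b E \<alpha> X \<longleftrightarrow> Amap A X = b \<and> X \<in> coneK E \<alpha>"

definition QP_optimal :: "real^'n^'n \<Rightarrow> ('m \<Rightarrow> real^'n^'n) \<Rightarrow> real^'m \<Rightarrow> real^'n^'n \<Rightarrow> real \<Rightarrow> real^'n^'n \<Rightarrow> bool" where
  "QP_optimal C A b E \<alpha> X \<longleftrightarrow> QP_feasible A b E \<alpha> X \<and>
     (\<forall>Y. QP_feasible A b E \<alpha> Y \<longrightarrow> trace (C ** X) \<le> trace (C ** Y))"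

definition Swath :: "real^'n^'n \<Rightarrow> ('m \<Rightarrow> real^'n^'n) \<Rightarrow> real^'m \<Rightarrow> real \<Rightarrow> (real^'n^'n) set" where
  "Swath C A b \<alpha> = {E. pos_def E \<and> Amap A E = b \<and> (\<exists>X. QP_optimal C A b E \<alpha> X)}"

end

(*
  Write E = Ri^2 with Ri symmetric, R = Ri^-1, and Q = t R X R. Then ||Q|| = alpha/2,
  tr Q >= alpha ||Q|| and E + t X = Ri (I + Q) Ri, so E(t) is a positive definite point of the
  affine space and, in the coordinates D |-> R D R, its cone is K_{I+Q}(alpha). It suffices that
  every nonzero recession direction D of the feasible set of QP_E(t)(alpha) has positive cost,
  for then the sublevel sets are compact. By Cauchy-Schwarz in the metric of (I+Q)^-1, every
  nonzero D in K_{I+Q}(alpha) satisfies tr D > 2 <Q, D>, unless alpha = 1, Q has rank one and D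
  is a positive multiple of Q^2. In the first case X + s D stays in K_E(alpha) for small s > 0,
  so the optimality of X gives tr(C D) > 0 (strictness comes from tilting D by a kernel
  direction of positive cost). In the second case D is positive semidefinite and nonzero, and
  tr(C D) = tr(S D) > 0 for the positive definite dual slack S.
*)
theory Submission
  imports Defs
begin

lemma matrix_add_rdistrib:
  fixes A B :: "'a::semiring_1^'k^'m" and C :: "'a^'n^'k"
  shows "(A + B) ** C = A ** C + B ** C"
  by (vector matrix_matrix_mult_def sum.distrib[symmetric] distrib_right)

lemma matrix_diff_ldistrib:
  fixes A :: "'a::ring_1^'k^'m" and B C :: "'a^'n^'k"
  shows "A ** (B - C) = A ** B - A ** C"
  by (vector matrix_matrix_mult_def sum_subtractf[symmetric] right_diff_distrib)

lemma matrix_diff_rdistrib: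
  fixes A B :: "'a::ring_1^'k^'m" and C :: "'a^'n^'k"
  shows "(A - B) ** C = A ** C - B ** C"
  by (vector matrix_matrix_mult_def sum_subtractf[symmetric] left_diff_distrib)

lemma trace_scaleR: "trace (c *\<^sub>R A) = c * trace (A :: real^'n^'n)"
  by (simp add: trace_def sum_distrib_left)

lemma trace_mult_eq_inner:
  fixes A :: "real^'m^'n" and B :: "real^'n^'m"
  shows "trace (A ** B) = transpose A \<bullet> B"
  by (simp add: trace_def matrix_matrix_mult_def inner_vec_def transpose_def)
     (subst sum.swap, simp)

lemma transpose_add: "transpose (A + B) = transpose A + transpose (B :: 'a::semiring_1^'n^'m)"
  by (simp add: transpose_def vec_eq_iff)

lemma transpose_diff: "transpose (A - B) = transpose A - transpose (B :: 'a::ring_1^'n^'m)"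
  by (simp add: transpose_def vec_eq_iff)

lemma sym_mat_add: "sym_mat A \<Longrightarrow> sym_mat B \<Longrightarrow> sym_mat (A + B)"
  by (simp add: sym_mat_def transpose_add)

lemma sym_mat_diff: "sym_mat A \<Longrightarrow> sym_mat B \<Longrightarrow> sym_mat (A - B)"
  by (simp add: sym_mat_def transpose_diff)

lemma sym_mat_scaleR: "sym_mat A \<Longrightarrow> sym_mat (c *\<^sub>R A)"
  by (simp add: sym_mat_def transpose_scalar)

lemma sym_mat_congruence: "sym_mat R \<Longrightarrow> sym_mat Y \<Longrightarrow> sym_mat (R ** Y ** R)"
  by (simp add: sym_mat_def matrix_transpose_mul matrix_mul_assoc)

lemma trace_sym_mult_eq_inner: "sym_mat A \<Longrightarrow> trace (A ** B) = A \<bullet> B"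
  by (simp add: sym_mat_def trace_mult_eq_inner)

lemma sym_mat_inner_commute: "sym_mat S \<Longrightarrow> x \<bullet> (S *v y) = y \<bullet> (S *v x)"
  by (metis sym_mat_def dot_lmul_matrix inner_commute transpose_matrix_vector)

lemma trace_congruence_cycle: "trace (R ** M ** R ** Y) = trace (M ** (R ** Y ** R))"
  for R M Y :: "real^'n^'n"
  using trace_mul_sym[of R "M ** R ** Y"] by (simp add: matrix_mul_assoc)

lemma trace_congruence_inner:
  fixes S U V :: "real^'n^'n"
  assumes "sym_mat S" "sym_mat U" "sym_mat V"
  shows "trace (S ** S ** U ** (S ** S ** V)) = (S ** U ** S) \<bullet> (S ** V ** S)"
proof -
  have "trace (S ** S ** U ** (S ** S ** V)) = trace (S ** (S ** U ** S ** S ** V))"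
    by (simp add: matrix_mul_assoc)
  also have "\<dots> = trace (S ** U ** S ** (S ** V ** S))"
    using trace_mul_sym[of S "S ** U ** S ** S ** V"] by (simp add: matrix_mul_assoc)
  finally show ?thesis
    using assms by (simp add: trace_sym_mult_eq_inner sym_mat_congruence)
qed

lemma congruence_cancel:
  fixes R Ri M :: "real^'n^'n"
  assumes "R ** Ri = mat 1" "Ri ** R = mat 1"
  shows "Ri ** (R ** M ** R) ** Ri = M"
proof -
  have "Ri ** (R ** M ** R) ** Ri = (Ri ** R) ** M ** (R ** Ri)" by (simp add: matrix_mul_assoc)
  then show ?thesis by (simp add: assms)
qed

lemma sym_mat_congruence_iff:
  fixes R Ri Y :: "real^'n^'n"
  assumes "sym_mat R" "sym_mat Ri" "R ** Ri = mat 1" "Ri ** R = mat 1"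
  shows "sym_mat (R ** Y ** R) \<longleftrightarrow> sym_mat Y"
  using sym_mat_congruence[OF assms(1), of Y] sym_mat_congruence[OF assms(2), of "R ** Y ** R"]
    congruence_cancel[OF assms(3,4), of Y]
  by auto

lemma invertible_mat_1: "invertible (mat 1 :: real^'n^'n)"
  unfolding invertible_def by (intro exI[of _ "mat 1"]) simp

lemma matrix_inv_right: "invertible A \<Longrightarrow> A ** matrix_inv A = mat 1"
  and matrix_inv_left: "invertible A \<Longrightarrow> matrix_inv A ** A = mat 1"
  for A :: "real^'n^'n"
  unfolding matrix_inv_def invertible_def by (metis (mono_tags, lifting) someI_ex)+

lemma matrix_inv_unique:
  fixes A B :: "real^'n^'n"
  assumes "A ** B = mat 1"
  shows "matrix_inv A = B"
proof -
  have "invertible A" using assms invertible_right_inverse by blast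
  then have "matrix_inv A = matrix_inv A ** (A ** B)"
    using assms by simp
  also have "\<dots> = (matrix_inv A ** A) ** B"
    by (simp add: matrix_mul_assoc)
  also have "\<dots> = B" by (simp add: matrix_inv_left \<open>invertible A\<close>)
  finally show ?thesis .
qed

lemma matrix_inv_mat_1: "matrix_inv (mat 1 :: real^'n^'n) = mat 1"
  by (simp add: matrix_inv_unique)

lemma matrix_inv_scaleR:
  fixes E :: "real^'n^'n"
  assumes "invertible E" "c \<noteq> 0"
  shows "matrix_inv (c *\<^sub>R E) = (1 / c) *\<^sub>R matrix_inv E"
  using assms by (intro matrix_inv_unique)
    (simp add: matrix_scalar_ac scalar_matrix_assoc[symmetric] matrix_inv_right)

lemma matrix_inv_congruence:
  fixes R Ri T :: "real^'n^'n"
  assumes R: "R ** Ri = mat 1" "Ri ** R = mat 1" and T: "invertible T"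
  shows "matrix_inv (Ri ** T ** Ri) = R ** matrix_inv T ** R"
proof (rule matrix_inv_unique)
  have "Ri ** T ** Ri ** (R ** matrix_inv T ** R) = Ri ** T ** (Ri ** R) ** matrix_inv T ** R"
    by (simp add: matrix_mul_assoc)
  also have "\<dots> = Ri ** R"
    by (simp add: R(2) matrix_mul_assoc[symmetric] matrix_inv_right[OF T])
  finally show "Ri ** T ** Ri ** (R ** matrix_inv T ** R) = mat 1"
    by (simp add: R(2))
qed

lemma matrix_inv_sqrt:
  fixes Sq Si :: "real^'n^'n"
  assumes "Sq ** Si = mat 1"
  shows "matrix_inv (Sq ** Sq) = Si ** Si"
proof (rule matrix_inv_unique)
  have "Sq ** Sq ** (Si ** Si) = Sq ** (Sq ** Si) ** Si" by (simp add: matrix_mul_assoc)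
  then show "Sq ** Sq ** (Si ** Si) = mat 1" by (simp add: assms matrix_mul_assoc[symmetric])
qed

section \<open>The spectral theorem for symmetric matrices\<close>

lemma linear_quadratic_nonpos_imp_zero:
  fixes c k :: real
  assumes "\<And>e. 2 * e * c + e\<^sup>2 * k \<le> 0"
  shows "c = 0"
proof -
  define \<delta> where "\<delta> = 1 / (\<bar>k\<bar> + 1)"
  have \<delta>: "\<delta> > 0" "\<delta> * \<bar>k\<bar> < 1"
    by (auto simp: \<delta>_def field_simps)
  have "\<delta> * - k \<le> \<delta> * \<bar>k\<bar>"
    using \<delta>(1) by (intro mult_left_mono) auto
  with \<delta> have "2 + \<delta> * k > 0" by simp
  moreover have "2 * (\<delta> * c) * c + (\<delta> * c)\<^sup>2 * k = \<delta> * c\<^sup>2 * (2 + \<delta> * k)"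
    by (simp add: power2_eq_square algebra_simps)
  with assms[of "\<delta> * c"] have "\<delta> * c\<^sup>2 * (2 + \<delta> * k) \<le> 0" by simp
  ultimately have "\<delta> * c\<^sup>2 \<le> 0"
    by (simp add: mult_le_0_iff)
  then show ?thesis using \<delta> by (simp add: mult_le_0_iff)
qed

lemma rayleigh_quotient_max_exists:
  fixes S :: "real^'n^'n"
  assumes "subspace V" "x0 \<in> V" "x0 \<noteq> 0"
  obtains v where "v \<in> V" "norm v = 1"
    "\<And>y. y \<in> V \<Longrightarrow> y \<bullet> (S *v y) \<le> (v \<bullet> (S *v v)) * (y \<bullet> y)"
proof -
  let ?K = "V \<inter> sphere 0 1"
  have cK: "compact ?K"
    using closed_subspace[OF assms(1)] by (simp add: closed_Int_compact)
  have "(1 / norm x0) *\<^sub>R x0 \<in> ?K"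
    using assms by (simp add: subspace_scale)
  then have neK: "?K \<noteq> {}" by blast
  have cf: "continuous_on ?K (\<lambda>x. x \<bullet> (S *v x))"
    by (intro continuous_intros)
  obtain v where v: "v \<in> ?K" and vmax: "\<And>u. u \<in> ?K \<Longrightarrow> u \<bullet> (S *v u) \<le> v \<bullet> (S *v v)"
    using continuous_attains_sup[OF cK neK cf] by blast
  have "y \<bullet> (S *v y) \<le> (v \<bullet> (S *v v)) * (y \<bullet> y)" if "y \<in> V" for y
  proof (cases "y = 0")
    case False
    have "(1 / norm y) *\<^sub>R y \<in> ?K"
      using that False assms(1) by (simp add: subspace_scale)
    from vmax[OF this] have "(y \<bullet> (S *v y)) / (norm y)\<^sup>2 \<le> v \<bullet> (S *v v)"
      by (simp add: matrix_vector_mult_scaleR power2_eq_square)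
    then show ?thesis
      using False by (simp add: divide_le_eq power2_norm_eq_inner)
  qed simp
  with v that show ?thesis by auto
qed

text \<open>A maximiser of the Rayleigh quotient on an invariant subspace is an eigenvector: the
  quadratic form of \<open>v + e w\<close> with \<open>w \<bottom> v\<close> shows that \<open>S v\<close> has no component along \<open>w\<close>.\<close>

lemma rayleigh_quotient_max_eigenvector:
  fixes S :: "real^'n^'n"
  assumes symS: "sym_mat S" and V: "subspace V" and inv: "\<And>x. x \<in> V \<Longrightarrow> S *v x \<in> V"
    and v: "v \<in> V" "norm v = 1"
    and vmax: "\<And>y. y \<in> V \<Longrightarrow> y \<bullet> (S *v y) \<le> (v \<bullet> (S *v v)) * (y \<bullet> y)"
  shows "S *v v = (v \<bullet> (S *v v)) *\<^sub>R v"
proof -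
  define l where "l = v \<bullet> (S *v v)"
  have orth: "w \<bullet> (S *v v) = 0" if w: "w \<in> V" "w \<bullet> v = 0" for w
  proof (rule linear_quadratic_nonpos_imp_zero)
    fix e :: real
    have "v + e *\<^sub>R w \<in> V"
      using w v V by (simp add: subspace_add subspace_scale)
    from vmax[OF this] show "2 * e * (w \<bullet> (S *v v)) + e\<^sup>2 * (w \<bullet> (S *v w) - l * (w \<bullet> w)) \<le> 0"
      using sym_mat_inner_commute[OF symS, of v w] v(2) w(2)
      by (simp add: matrix_vector_right_distrib matrix_vector_mult_scaleR inner_add_left
          inner_add_right inner_commute norm_eq_1 l_def power2_eq_square algebra_simps)
  qed
  define u where "u = S *v v - l *\<^sub>R v"
  have "u \<in> V"
    using V v inv by (simp add: u_def subspace_diff subspace_scale)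
  moreover have uv: "u \<bullet> v = 0"
    using v(2) by (simp add: u_def inner_diff_left l_def norm_eq_1 inner_commute[of "S *v v" v])
  ultimately have "u \<bullet> u = 0"
    using orth by (simp add: u_def inner_diff_right inner_commute[of v])
  then show ?thesis by (simp add: u_def l_def)
qed

lemma subspace_orthogonal_slice:
  fixes V :: "'a::euclidean_space set"
  assumes "subspace V" "v \<in> V" "v \<noteq> 0"
  shows "subspace {x \<in> V. x \<bullet> v = 0}" "dim {x \<in> V. x \<bullet> v = 0} < dim V"
proof -
  show sub: "subspace {x \<in> V. x \<bullet> v = 0}"
    using assms(1) unfolding subspace_def by (auto simp: inner_add_left)
  have "v \<notin> {x \<in> V. x \<bullet> v = 0}" using assms(3) by simp
  with assms(2) have "{x \<in> V. x \<bullet> v = 0} \<subset> V" by blast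
  then show "dim {x \<in> V. x \<bullet> v = 0} < dim V"
    using dim_psubset[of _ V] sub assms(1) by (metis span_eq_iff)
qed

lemma sym_mat_invariant_subspace_eigenbasis:
  fixes S :: "real^'n^'n"
  assumes symS: "sym_mat S"
  shows "subspace V \<Longrightarrow> (\<And>x. x \<in> V \<Longrightarrow> S *v x \<in> V) \<Longrightarrow>
    \<exists>B. B \<subseteq> V \<and> pairwise orthogonal B \<and> V \<subseteq> span B \<and>
      (\<forall>b\<in>B. norm b = 1 \<and> S *v b = (b \<bullet> (S *v b)) *\<^sub>R b)"
proof (induction "dim V" arbitrary: V rule: less_induct)
  case less
  show ?case
  proof (cases "V \<subseteq> {0}")
    case True
    then show ?thesis by (intro exI[of _ "{}"]) auto
  next
    case False
    then obtain x0 where x0: "x0 \<in> V" "x0 \<noteq> 0" by auto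
    obtain v where v: "v \<in> V" "norm v = 1"
      and vmax: "\<And>y. y \<in> V \<Longrightarrow> y \<bullet> (S *v y) \<le> (v \<bullet> (S *v v)) * (y \<bullet> y)"
      using rayleigh_quotient_max_exists[OF less.prems(1) x0, of S] by blast
    define l where "l = v \<bullet> (S *v v)"
    have eig: "S *v v = l *\<^sub>R v"
      unfolding l_def using rayleigh_quotient_max_eigenvector[OF symS less.prems v vmax] .
    define V' where "V' = {x \<in> V. x \<bullet> v = 0}"
    have "v \<noteq> 0" using v(2) by auto
    note slice = subspace_orthogonal_slice[OF less.prems(1) v(1) this, folded V'_def]
    have "S *v x \<in> V'" if "x \<in> V'" for x
      using that less.prems(2) sym_mat_inner_commute[OF symS, of x v]
      by (auto simp: V'_def eig inner_commute)
    then obtain B' where B': "B' \<subseteq> V'" "pairwise orthogonal B'" "V' \<subseteq> span B'"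
      "\<forall>b\<in>B'. norm b = 1 \<and> S *v b = (b \<bullet> (S *v b)) *\<^sub>R b"
      using less.hyps[OF slice(2,1)] by blast
    have "V \<subseteq> span (insert v B')"
    proof
      fix x assume "x \<in> V"
      then have "x - (x \<bullet> v) *\<^sub>R v \<in> V'"
        using v less.prems(1) by (simp add: V'_def subspace_diff subspace_scale inner_diff_left norm_eq_1)
      then show "x \<in> span (insert v B')"
        using B'(3) span_breakdown_eq by blast
    qed
    moreover have "pairwise orthogonal (insert v B')"
      using B'(1,2) by (auto simp: pairwise_insert V'_def orthogonal_def inner_commute)
    ultimately show ?thesis
      using B'(1,4) v eig by (intro exI[of _ "insert v B'"]) (auto simp: V'_def l_def)
  qed
qed

definition diag_mat :: "real^'n \<Rightarrow> real^'n^'n" where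
  "diag_mat d = (\<chi> i j. if i = j then d $ i else 0)"

lemma diag_mat_mult: "diag_mat a ** diag_mat b = diag_mat (\<chi> i. a $ i * b $ i)"
  by (simp add: diag_mat_def matrix_matrix_mult_def vec_eq_iff if_distrib[of "\<lambda>x. x * _"]
      if_distrib[of "\<lambda>x. _ * x"] cong: if_cong)

lemma transpose_diag_mat: "transpose (diag_mat a) = diag_mat a"
  by (simp add: diag_mat_def transpose_def vec_eq_iff)

lemma diag_mat_eq_mat_1: "(\<And>i. a $ i = 1) \<Longrightarrow> diag_mat a = mat 1"
  by (simp add: diag_mat_def mat_def vec_eq_iff)

lemma orthonormal_basis_enumeration:
  fixes B :: "(real^'n) set"
  assumes B: "pairwise orthogonal B" "UNIV \<subseteq> span B" "\<And>b. b \<in> B \<Longrightarrow> norm b = 1"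
  obtains f :: "'n \<Rightarrow> real^'n" where "\<And>j. f j \<in> B" "\<And>i j. f i \<bullet> f j = (if i = j then 1 else 0)"
proof -
  have "0 \<notin> B" using B(3) by force
  then have indB: "independent B"
    using B(1) pairwise_orthogonal_independent by blast
  then have "finite B" using independent_imp_finite by blast
  moreover have "span B = UNIV" using B(2) by auto
  then have "card B = CARD('n)"
    using dim_span_eq_card_independent[OF indB] by simp
  ultimately obtain f where f: "bij_betw f (UNIV::'n set) B"
    using finite_same_card_bij[of "UNIV::'n set" B] by auto
  then have fB: "f j \<in> B" for j by (auto simp: bij_betw_def)
  have "f i \<bullet> f j = (if i = j then 1 else 0)" for i j
  proof (cases "i = j")
    case False
    then have "f i \<noteq> f j" using f by (auto simp: bij_betw_def inj_on_def)
    then show ?thesis using B(1) fB False by (auto simp: pairwise_def orthogonal_def)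
  qed (use B(3) fB in \<open>simp add: norm_eq_1\<close>)
  with fB that show ?thesis by blast
qed

theorem sym_mat_diagonalization:
  fixes S :: "real^'n^'n"
  assumes symS: "sym_mat S"
  obtains U d where "orthogonal_matrix U" "S ** U = U ** diag_mat d"
proof -
  obtain B where B: "pairwise orthogonal B" "UNIV \<subseteq> span B"
    "\<forall>b\<in>B. norm b = 1 \<and> S *v b = (b \<bullet> (S *v b)) *\<^sub>R b"
    using sym_mat_invariant_subspace_eigenbasis[OF symS, of UNIV] by auto
  have "\<And>b. b \<in> B \<Longrightarrow> norm b = 1" using B(3) by blast
  then obtain f :: "'n \<Rightarrow> real^'n" where fB: "\<And>j. f j \<in> B" and orthonormal: "\<And>i j. f i \<bullet> f j = (if i = j then 1 else 0)"
    using orthonormal_basis_enumeration[OF B(1,2)] by blast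
  define U where "U = (\<chi> i j. f j $ i)"
  define d where "d = (\<chi> j. f j \<bullet> (S *v f j))"
  have eig: "S *v f j = d $ j *\<^sub>R f j" for j
    using B(3) fB[of j] by (simp add: d_def)
  have "transpose U ** U = mat 1"
    unfolding U_def
    by (simp add: vec_eq_iff matrix_matrix_mult_def transpose_def mat_def orthonormal[symmetric] inner_vec_def)
  then have "orthogonal_matrix U" by (simp add: orthogonal_matrix)
  moreover have "(S ** U) $ i $ j = (U ** diag_mat d) $ i $ j" for i j
  proof -
    have "(S ** U) $ i $ j = (S *v f j) $ i"
      by (simp add: matrix_matrix_mult_def matrix_vector_mult_def U_def)
    also have "\<dots> = d $ j * f j $ i"
      by (simp add: eig)
    also have "\<dots> = (U ** diag_mat d) $ i $ j"
      by (simp add: matrix_matrix_mult_def diag_mat_def U_def if_distrib[of "\<lambda>x. _ * x"] cong: if_cong)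
    finally show ?thesis .
  qed
  then have "S ** U = U ** diag_mat d" by (simp add: vec_eq_iff)
  ultimately show ?thesis using that by blast
qed

lemma pos_def_sym_mat: "pos_def E \<Longrightarrow> sym_mat E"
  by (simp add: pos_def_def)

lemma pos_def_invertible:
  fixes E :: "real^'n^'n"
  assumes "pos_def E"
  shows "invertible E"
proof -
  have "E *v x = 0 \<Longrightarrow> x = 0" for x
    using assms unfolding pos_def_def by force
  then show ?thesis
    using matrix_left_invertible_ker invertible_left_inverse by blast
qed

lemma pos_def_congruence:
  fixes T R :: "real^'n^'n"
  assumes pd: "pos_def T" and symR: "sym_mat R" and inv: "invertible R"
  shows "pos_def (R ** T ** R)"
  unfolding pos_def_def
proof (intro conjI allI impI)
  show "sym_mat (R ** T ** R)"
    using pd symR by (simp add: pos_def_def sym_mat_congruence)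
  fix v :: "real^'n" assume "v \<noteq> 0"
  then have "R *v v \<noteq> 0"
    using inv by (metis invertible_def matrix_vector_mul_assoc matrix_vector_mul_lid matrix_vector_mult_0_right)
  with pd have "0 < (R *v v) \<bullet> (T *v (R *v v))" by (simp add: pos_def_def)
  also have "\<dots> = v \<bullet> (R *v (T *v (R *v v)))"
    by (simp add: sym_mat_inner_commute[OF symR, of v] inner_commute)
  also have "\<dots> = v \<bullet> ((R ** T ** R) *v v)"
    by (simp add: matrix_vector_mul_assoc matrix_mul_assoc)
  finally show "0 < v \<bullet> ((R ** T ** R) *v v)" .
qed

lemma pos_def_scaleR: "pos_def T \<Longrightarrow> c > 0 \<Longrightarrow> pos_def (c *\<^sub>R T)"
  by (simp add: pos_def_def sym_mat_scaleR scaleR_matrix_vector_assoc[symmetric])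

lemma transpose_mult_mult_diag_entry:
  fixes U M :: "real^'n^'n"
  shows "(transpose U ** M ** U) $ j $ j = column j U \<bullet> (M *v column j U)"
  by (simp add: matrix_matrix_mult_def transpose_def inner_vec_def column_def
      matrix_vector_mult_def sum_distrib_left sum_distrib_right mult_ac, subst sum.swap, simp add: mult_ac)

lemma pos_def_diagonalization_pos:
  fixes M U :: "real^'n^'n"
  assumes pd: "pos_def M" and U: "orthogonal_matrix U" and MU: "M ** U = U ** diag_mat d"
  shows "d $ j > 0"
proof -
  have "transpose U ** M ** U = diag_mat d"
    using U by (simp add: matrix_mul_assoc MU orthogonal_matrix matrix_mul_assoc[symmetric])
  then have "d $ j = column j U \<bullet> (M *v column j U)"
    using transpose_mult_mult_diag_entry[of U M j] by (simp add: diag_mat_def)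
  moreover have "column j U \<noteq> 0"
  proof
    assume "column j U = 0"
    then have "(transpose U ** U) $ j $ j = 0"
      by (simp add: matrix_matrix_mult_def transpose_def column_def vec_eq_iff)
    with U show False by (simp add: orthogonal_matrix mat_def)
  qed
  ultimately show ?thesis using pd by (simp add: pos_def_def)
qed

lemma pos_def_sqrt:
  fixes M :: "real^'n^'n"
  assumes pd: "pos_def M"
  obtains R Ri where "sym_mat R" "sym_mat Ri" "R ** R = M" "R ** Ri = mat 1" "Ri ** R = mat 1"
proof -
  obtain U :: "real^'n^'n" and d where U: "orthogonal_matrix U" and MU: "M ** U = U ** diag_mat d"
    using sym_mat_diagonalization[OF pos_def_sym_mat[OF pd]] by metis
  have UU: "transpose U ** U = mat 1" "U ** transpose U = mat 1"
    using U by (auto simp: orthogonal_matrix_def)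
  have dpos: "d $ j > 0" for j
    using pos_def_diagonalization_pos[OF pd U MU] .
  define f where "f a = U ** diag_mat a ** transpose U" for a
  have f_mult: "f a ** f b = f (\<chi> i. a $ i * b $ i)" for a b
  proof -
    have "f a ** f b = U ** diag_mat a ** (transpose U ** U) ** diag_mat b ** transpose U"
      by (simp add: f_def matrix_mul_assoc)
    also have "\<dots> = U ** (diag_mat a ** diag_mat b) ** transpose U"
      by (simp add: UU matrix_mul_assoc)
    finally show ?thesis by (simp add: f_def diag_mat_mult)
  qed
  have f_sym: "sym_mat (f a)" for a
    by (simp add: f_def sym_mat_def matrix_transpose_mul transpose_diag_mat matrix_mul_assoc)
  have "f d = (M ** U) ** transpose U" by (simp add: f_def MU)
  then have fd: "f d = M" by (simp add: matrix_mul_assoc[symmetric] UU)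
  have f_one: "f a = mat 1" if "\<And>i. a $ i = 1" for a
    using that by (simp add: f_def diag_mat_eq_mat_1 UU)
  define sd where "sd = (\<chi> j. sqrt (d $ j))"
  define isd where "isd = (\<chi> j. 1 / sqrt (d $ j))"
  have "f sd ** f sd = M"
    using dpos by (simp add: f_mult sd_def fd[symmetric] less_imp_le vec_eq_iff[of _ d, symmetric])
  moreover have "f sd ** f isd = mat 1" "f isd ** f sd = mat 1"
    using dpos by (auto simp: f_mult sd_def isd_def less_imp_neq[symmetric] intro!: f_one)
  ultimately show ?thesis using that f_sym by blast
qed

lemma norm_matrix_vector_le: "norm (A *v x) \<le> norm A * norm (x :: real^'n)"
  for A :: "real^'n^'m"
proof -
  have "(norm (A *v x))\<^sup>2 = (\<Sum>i\<in>UNIV. (A $ i \<bullet> x)\<^sup>2)"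
    unfolding power2_norm_eq_inner by (simp add: inner_vec_def matrix_vector_mul_component power2_eq_square)
  also have "\<dots> \<le> (\<Sum>i\<in>UNIV. (norm (A $ i))\<^sup>2 * (norm x)\<^sup>2)"
  proof (rule sum_mono)
    fix i
    have "\<bar>A $ i \<bullet> x\<bar> \<le> norm (A $ i) * norm x" by (rule Cauchy_Schwarz_ineq2)
    then show "(A $ i \<bullet> x)\<^sup>2 \<le> (norm (A $ i))\<^sup>2 * (norm x)\<^sup>2"
      by (metis abs_ge_zero power2_abs power_mono power_mult_distrib)
  qed
  also have "\<dots> = (norm A * norm x)\<^sup>2"
    by (simp add: sum_distrib_right[symmetric] power_mult_distrib power2_norm_eq_inner inner_vec_def)
  finally show ?thesis
    by (rule power2_le_imp_le) simp
qed

lemma pos_def_id_plus: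
  fixes Q :: "real^'n^'n"
  assumes symQ: "sym_mat Q" and nQ: "norm Q < 1"
  shows "pos_def (mat 1 + Q)"
  unfolding pos_def_def
proof (intro conjI allI impI)
  show "sym_mat (mat 1 + Q)" using symQ by (simp add: sym_mat_def transpose_add)
  fix x :: "real^'n" assume "x \<noteq> 0"
  have "\<bar>x \<bullet> (Q *v x)\<bar> \<le> norm x * (norm Q * norm x)"
    using Cauchy_Schwarz_ineq2[of x "Q *v x"] mult_left_mono[OF norm_matrix_vector_le[of Q x], of "norm x"] by simp
  then have "(1 - norm Q) * (norm x)\<^sup>2 \<le> x \<bullet> x + x \<bullet> (Q *v x)"
    by (simp add: power2_norm_eq_inner[symmetric] power2_eq_square algebra_simps abs_le_iff)
  moreover have "(1 - norm Q) * (norm x)\<^sup>2 > 0" using nQ \<open>x \<noteq> 0\<close> by simp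
  ultimately show "0 < x \<bullet> ((mat 1 + Q) *v x)"
    by (simp add: matrix_vector_mult_add_rdistrib inner_add_right)
qed

lemma pos_def_trace_congruence_pos:
  fixes S B :: "real^'n^'n"
  assumes pd: "pos_def S" and "B \<noteq> 0"
  shows "0 < trace (transpose B ** S ** B)"
proof -
  obtain j k where "B $ k $ j \<noteq> 0" using \<open>B \<noteq> 0\<close> by (auto simp: vec_eq_iff)
  then have "column j B \<noteq> 0" by (auto simp: column_def vec_eq_iff)
  have "0 \<le> column i B \<bullet> (S *v column i B)" for i
    using pd by (cases "column i B = 0") (auto simp: pos_def_def less_imp_le)
  moreover have "0 < column j B \<bullet> (S *v column j B)"
    using pd \<open>column j B \<noteq> 0\<close> by (simp add: pos_def_def)
  ultimately show ?thesis
    unfolding trace_def transpose_mult_mult_diag_entry by (intro sum_pos2[of UNIV j]) auto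
qed

section \<open>The Frobenius norm of a product\<close>

lemma lagrange_identity:
  fixes a b :: "'k \<Rightarrow> real"
  shows "(\<Sum>k\<in>K. (a k)\<^sup>2) * (\<Sum>k\<in>K. (b k)\<^sup>2) - (\<Sum>k\<in>K. a k * b k)\<^sup>2
     = (\<Sum>k\<in>K. \<Sum>l\<in>K. (a k * b l - a l * b k)\<^sup>2) / 2"
proof -
  have "(\<Sum>k\<in>K. \<Sum>l\<in>K. (a k * b l - a l * b k)\<^sup>2)
      = (\<Sum>k\<in>K. \<Sum>l\<in>K. (a k)\<^sup>2 * (b l)\<^sup>2) + (\<Sum>k\<in>K. \<Sum>l\<in>K. (a l)\<^sup>2 * (b k)\<^sup>2)
        - 2 * (\<Sum>k\<in>K. \<Sum>l\<in>K. (a k * b k) * (a l * b l))"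
    by (simp add: power2_eq_square algebra_simps sum.distrib sum_subtractf sum_distrib_left)
  also have "\<dots> = 2 * ((\<Sum>k\<in>K. (a k)\<^sup>2) * (\<Sum>k\<in>K. (b k)\<^sup>2) - (\<Sum>k\<in>K. a k * b k)\<^sup>2)"
  proof -
    have 1: "(\<Sum>k\<in>K. \<Sum>l\<in>K. (a k)\<^sup>2 * (b l)\<^sup>2) = (\<Sum>k\<in>K. (a k)\<^sup>2) * (\<Sum>k\<in>K. (b k)\<^sup>2)"
      by (simp add: sum_product)
    have 2: "(\<Sum>k\<in>K. \<Sum>l\<in>K. (a l)\<^sup>2 * (b k)\<^sup>2) = (\<Sum>k\<in>K. (a k)\<^sup>2) * (\<Sum>k\<in>K. (b k)\<^sup>2)"
      by (simp add: sum_product mult.commute) (rule sum.swap)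
    have 3: "(\<Sum>k\<in>K. \<Sum>l\<in>K. (a k * b k) * (a l * b l)) = (\<Sum>k\<in>K. a k * b k)\<^sup>2"
      by (simp add: sum_product power2_eq_square)
    show ?thesis unfolding 1 2 3 by simp
  qed
  finally show ?thesis by simp
qed

lemma norm_matrix_squared: "(norm A)\<^sup>2 = (\<Sum>i\<in>UNIV. \<Sum>j\<in>UNIV. (A $ i $ j)\<^sup>2)"
  for A :: "real^'n^'m"
  unfolding power2_norm_eq_inner by (simp add: inner_vec_def power2_eq_square)

lemma norm_matrix_mult_gap:
  fixes A :: "real^'k^'m" and B :: "real^'n^'k"
  shows "(norm A * norm B)\<^sup>2 - (norm (A ** B))\<^sup>2
     = (\<Sum>i\<in>UNIV. \<Sum>j\<in>UNIV. \<Sum>k\<in>UNIV. \<Sum>l\<in>UNIV. (A$i$k * B$l$j - A$i$l * B$k$j)\<^sup>2) / 2"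
proof -
  have "(norm A * norm B)\<^sup>2
      = (\<Sum>i\<in>UNIV. \<Sum>k\<in>UNIV. (A$i$k)\<^sup>2) * (\<Sum>j\<in>UNIV. \<Sum>k\<in>UNIV. (B$k$j)\<^sup>2)"
    by (simp add: power_mult_distrib norm_matrix_squared[of A] norm_matrix_squared[of B] sum.swap[of _ "UNIV::'n set"])
  also have "\<dots> = (\<Sum>i\<in>UNIV. \<Sum>j\<in>UNIV. (\<Sum>k\<in>UNIV. (A$i$k)\<^sup>2) * (\<Sum>k\<in>UNIV. (B$k$j)\<^sup>2))"
    by (rule sum_product)
  finally have "(norm A * norm B)\<^sup>2 = \<dots>" .
  moreover have "(norm (A ** B))\<^sup>2 = (\<Sum>i\<in>UNIV. \<Sum>j\<in>UNIV. (\<Sum>k\<in>UNIV. A$i$k * B$k$j)\<^sup>2)"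
    by (simp add: norm_matrix_squared matrix_matrix_mult_def)
  ultimately show ?thesis
    by (simp add: lagrange_identity sum_subtractf[symmetric] sum_divide_distrib)
qed

lemma norm_matrix_mult_le: "norm (A ** B) \<le> norm A * norm B"
  for A :: "real^'k^'m" and B :: "real^'n^'k"
proof -
  have "0 \<le> (\<Sum>i\<in>UNIV. \<Sum>j\<in>UNIV. \<Sum>k\<in>UNIV. \<Sum>l\<in>UNIV. (A$i$k * B$l$j - A$i$l * B$k$j)\<^sup>2) / 2"
    by (intro divide_nonneg_pos sum_nonneg) auto
  then have "(norm (A ** B))\<^sup>2 \<le> (norm A * norm B)\<^sup>2"
    using norm_matrix_mult_gap[of A B] by linarith
  then show ?thesis by (rule power2_le_imp_le) simp
qed

lemma norm_matrix_mult_eq_imp_minors: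
  fixes A :: "real^'k^'m" and B :: "real^'n^'k"
  assumes "norm (A ** B) = norm A * norm B"
  shows "A$i$k * B$l$j = A$i$l * B$k$j"
proof -
  let ?t = "\<lambda>i j k l. (A$i$k * B$l$j - A$i$l * B$k$j)\<^sup>2"
  have "(\<Sum>i\<in>UNIV. \<Sum>j\<in>UNIV. \<Sum>k\<in>UNIV. \<Sum>l\<in>UNIV. ?t i j k l) = 0"
    using norm_matrix_mult_gap[of A B] assms by simp
  then have "?t i j k l = 0"
    by (simp add: sum_nonneg_eq_0_iff sum_nonneg)
  then show ?thesis by simp
qed

text \<open>Equality in \<open>\<parallel>Q\<^sup>2\<parallel> \<le> \<parallel>Q\<parallel>\<^sup>2\<close> forces all \<open>2 \<times> 2\<close> minors of \<open>Q\<close> to vanish, i.e.\ \<open>Q\<close> has rank at most one.\<close>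

lemma sym_mat_square_eq_trace_scaleR:
  fixes Q :: "real^'n^'n"
  assumes symQ: "sym_mat Q" and eq: "norm (Q ** Q) = (norm Q)\<^sup>2"
  shows "Q ** Q = trace Q *\<^sub>R Q"
proof -
  have Qsym: "Q$a$b = Q$b$a" for a b
  proof -
    have "transpose Q $ b $ a = Q $ a $ b" by (simp add: transpose_def)
    then show ?thesis using symQ by (simp add: sym_mat_def)
  qed
  have eq': "norm (Q ** Q) = norm Q * norm Q"
    using eq by (simp add: power2_eq_square)
  have minor: "Q$i$k * Q$k$j = Q$i$j * Q$k$k" for i j k
    using norm_matrix_mult_eq_imp_minors[OF eq', of i j k k] Qsym[of j k] by simp
  have "(Q ** Q)$i$j = (\<Sum>k\<in>UNIV. Q$i$j * Q$k$k)" for i j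
    by (simp add: matrix_matrix_mult_def minor)
  then show ?thesis
    by (simp add: vec_eq_iff trace_def sum_distrib_left mult.commute)
qed

section \<open>The cones K_E(alpha)\<close>

lemma normE_congruence:
  fixes R Ri T Y :: "real^'n^'n"
  assumes "R ** Ri = mat 1" "Ri ** R = mat 1" "invertible T"
  shows "normE (Ri ** T ** Ri) Y = normE T (R ** Y ** R)"
proof -
  let ?Ti = "matrix_inv T"
  have "trace (R ** ?Ti ** R ** Y ** (R ** ?Ti ** R ** Y))
      = trace (R ** (?Ti ** R ** Y ** R ** ?Ti ** R ** Y))"
    by (simp add: matrix_mul_assoc)
  also have "\<dots> = trace (?Ti ** R ** Y ** R ** ?Ti ** R ** Y ** R)"
    using trace_mul_sym[of R "?Ti ** R ** Y ** R ** ?Ti ** R ** Y"] by (simp add: matrix_mul_assoc)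
  also have "\<dots> = trace (?Ti ** (R ** Y ** R) ** (?Ti ** (R ** Y ** R)))"
    by (simp add: matrix_mul_assoc)
  finally show ?thesis
    by (simp add: normE_def matrix_inv_congruence[OF assms])
qed

lemma coneK_congruence:
  fixes R Ri T Y :: "real^'n^'n"
  assumes "sym_mat R" "sym_mat Ri" "R ** Ri = mat 1" "Ri ** R = mat 1" "invertible T"
  shows "Y \<in> coneK (Ri ** T ** Ri) \<alpha> \<longleftrightarrow> R ** Y ** R \<in> coneK T \<alpha>"
proof -
  have "trace (matrix_inv (Ri ** T ** Ri) ** Y) = trace (matrix_inv T ** (R ** Y ** R))"
    by (simp only: matrix_inv_congruence[OF assms(3-5)] trace_congruence_cycle)
  then show ?thesis
    using sym_mat_congruence_iff[OF assms(1-4), of Y] normE_congruence[OF assms(3-5), of Y]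
    by (simp add: coneK_def)
qed

lemma normE_mat_1: "sym_mat Y \<Longrightarrow> normE (mat 1) Y = norm Y"
  by (simp add: normE_def matrix_inv_mat_1 trace_sym_mult_eq_inner norm_eq_sqrt_inner)

lemma coneK_mat_1: "Y \<in> coneK (mat 1) \<alpha> \<longleftrightarrow> sym_mat Y \<and> \<alpha> * norm Y \<le> trace Y"
  by (auto simp: coneK_def normE_def matrix_inv_mat_1 trace_mult_eq_inner sym_mat_def norm_eq_sqrt_inner)

lemma coneK_sqrt:
  fixes R Ri Y :: "real^'n^'n"
  assumes R: "sym_mat R" "sym_mat Ri" "R ** Ri = mat 1" "Ri ** R = mat 1"
  shows "Y \<in> coneK (Ri ** Ri) \<alpha> \<longleftrightarrow> sym_mat Y \<and> \<alpha> * norm (R ** Y ** R) \<le> trace (R ** Y ** R)"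
  using coneK_congruence[OF R invertible_mat_1, of Y \<alpha>] sym_mat_congruence_iff[OF R, of Y]
  by (auto simp: coneK_mat_1)

lemma coneK_scaleR_left:
  fixes E :: "real^'n^'n"
  assumes "invertible E" "c > 0"
  shows "coneK (c *\<^sub>R E) \<alpha> = coneK E \<alpha>"
proof -
  have "normE (c *\<^sub>R E) Y = (1 / c) * normE E Y" for Y
    using assms
    by (simp add: normE_def matrix_inv_scaleR matrix_scalar_ac scalar_matrix_assoc[symmetric]
        trace_scaleR real_sqrt_divide)
  moreover have "trace (matrix_inv (c *\<^sub>R E) ** Y) = (1 / c) * trace (matrix_inv E ** Y)" for Y
    using assms by (simp add: matrix_inv_scaleR scalar_matrix_assoc[symmetric] trace_scaleR)
  ultimately show ?thesis
    using assms by (auto simp: coneK_def divide_le_cancel)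
qed

lemma self_mem_coneK:
  fixes E :: "real^'n^'n"
  assumes "sym_mat E" "invertible E" "\<alpha> \<le> 1"
  shows "E \<in> coneK E \<alpha>"
proof -
  have inv: "matrix_inv E ** E = mat 1" using matrix_inv_left[OF assms(2)] .
  have "\<alpha> * sqrt (real CARD('n)) \<le> sqrt (real CARD('n))"
    using assms(3) mult_right_mono[of \<alpha> 1 "sqrt (real CARD('n))"] by simp
  also have "\<dots> \<le> real CARD('n)"
    using real_sqrt_le_iff[of "real CARD('n)" "(real CARD('n))\<^sup>2"]
    by (simp add: power2_eq_square)
  finally show ?thesis
    using assms(1) by (simp add: coneK_def normE_def inv trace_I)
qed

lemma linear_Amap: "linear (Amap A)"
  by (rule linearI) (simp_all add: Amap_def vec_eq_iff matrix_add_ldistrib trace_add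
      matrix_scalar_ac scalar_matrix_assoc[symmetric] trace_scaleR)

lemma linear_trace_mult: "linear (\<lambda>Y. trace (C ** Y))"
  for C :: "real^'n^'n"
  by (rule linearI) (simp_all add: matrix_add_ldistrib trace_add matrix_scalar_ac scalar_matrix_assoc[symmetric] trace_scaleR)

lemma continuous_on_Amap: "continuous_on S (Amap A)"
  by (intro linear_continuous_on iffD1[OF linear_conv_bounded_linear] linear_Amap)

lemma continuous_on_trace_mult: "continuous_on S (\<lambda>Y. trace (C ** Y))"
  for C :: "real^'n^'n"
  by (intro linear_continuous_on iffD1[OF linear_conv_bounded_linear] linear_trace_mult)

lemma continuous_on_matrix_mult_left [continuous_intros]:
  "continuous_on S f \<Longrightarrow> continuous_on S (\<lambda>x. M ** (f x :: real^'n^'k))"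
  for M :: "real^'k^'m"
  unfolding matrix_matrix_mult_def by (intro continuous_intros)

lemma continuous_on_transpose [continuous_intros]:
  "continuous_on S f \<Longrightarrow> continuous_on S (\<lambda>x. transpose (f x :: real^'n^'m))"
  unfolding transpose_def by (intro continuous_intros)

lemma continuous_on_normE: "continuous_on S (normE E)"
  unfolding normE_def[abs_def] trace_mult_eq_inner by (intro continuous_intros)

lemma closed_coneK: "closed (coneK E \<alpha>)"
proof -
  have "coneK E \<alpha> = {Y. transpose Y = Y} \<inter> {Y. \<alpha> * normE E Y \<le> trace (matrix_inv E ** Y)}"
    by (auto simp: coneK_def sym_mat_def)
  moreover have "closed {Y::real^'n^'n. transpose Y = Y}"
    by (rule closed_Collect_eq) (auto intro!: continuous_intros)
  moreover have "closed {Y. \<alpha> * normE E Y \<le> trace (matrix_inv E ** Y)}"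
    by (rule closed_Collect_le) (auto intro!: continuous_intros continuous_on_normE continuous_on_trace_mult)
  ultimately show ?thesis by auto
qed

lemma normE_scaleR: "normE E (c *\<^sub>R Y) = \<bar>c\<bar> * normE E Y"
  by (simp add: normE_def matrix_scalar_ac scalar_matrix_assoc[symmetric] trace_scaleR
      real_sqrt_mult power2_eq_square[symmetric])

lemma coneK_scaleR: "Y \<in> coneK E \<alpha> \<Longrightarrow> c > 0 \<Longrightarrow> c *\<^sub>R Y \<in> coneK E \<alpha>"
  by (auto simp: coneK_def sym_mat_scaleR normE_scaleR matrix_scalar_ac scalar_matrix_assoc[symmetric] trace_scaleR)

lemma Amap_eq_inner: "sym_mat (A i) \<Longrightarrow> Amap A Y $ i = A i \<bullet> Y"
  by (simp add: Amap_def trace_sym_mult_eq_inner)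

section \<open>Existence of optimal solutions\<close>

lemma span_range_subset_sums:
  fixes A :: "'m::finite \<Rightarrow> 'a::real_vector"
  shows "span (range A) \<subseteq> range (\<lambda>y::real^'m. \<Sum>i\<in>UNIV. y $ i *\<^sub>R A i)"
proof (rule span_minimal)
  have "linear (\<lambda>y::real^'m. \<Sum>i\<in>UNIV. y $ i *\<^sub>R A i)"
    by (rule linearI) (simp_all add: sum.distrib scaleR_add_left scaleR_sum_right)
  then show "subspace (range (\<lambda>y::real^'m. \<Sum>i\<in>UNIV. y $ i *\<^sub>R A i))"
    by (rule linear_subspace_image[OF _ subspace_UNIV])
  show "range A \<subseteq> range (\<lambda>y::real^'m. \<Sum>i\<in>UNIV. y $ i *\<^sub>R A i)"
  proof
    fix M assume "M \<in> range A"
    then obtain j where "M = A j" by auto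
    moreover have "A j = (\<Sum>i\<in>UNIV. axis j 1 $ i *\<^sub>R A i)"
      by (simp add: axis_def if_distrib[of "\<lambda>c. c *\<^sub>R _"] cong: if_cong)
    ultimately show "M \<in> range (\<lambda>y::real^'m. \<Sum>i\<in>UNIV. y $ i *\<^sub>R A i)"
      by (intro image_eqI[of _ _ "axis j 1"]) auto
  qed
qed

lemma exists_kernel_direction_cost_pos:
  fixes C :: "real^'n^'n" and A :: "'m::finite \<Rightarrow> real^'n^'n"
  assumes symC: "sym_mat C" and symA: "\<And>i. sym_mat (A i)"
    and C_not_span: "\<not> (\<exists>y::real^'m. C = (\<Sum>i\<in>UNIV. y $ i *\<^sub>R A i))"
  obtains R where "sym_mat R" "Amap A R = 0" "0 < trace (C ** R)"
proof -
  obtain p z where p: "p \<in> span (range A)" and orth: "\<And>w. w \<in> span (range A) \<Longrightarrow> orthogonal z w"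
    and Cpz: "C = p + z"
    using orthogonal_subspace_decomp_exists[of "range A" C] by blast
  define W where "W = range (\<lambda>y::real^'m. \<Sum>i\<in>UNIV. y $ i *\<^sub>R A i)"
  have "span (range A) \<subseteq> W" unfolding W_def by (rule span_range_subset_sums)
  have "subspace {M::real^'n^'n. sym_mat M}"
    by (auto simp: subspace_def sym_mat_def transpose_add transpose_scalar transpose_def vec_eq_iff)
  moreover have "range A \<subseteq> {M. sym_mat M}" using symA by auto
  ultimately have "sym_mat p" using span_minimal p by blast
  moreover have "z = C - p" using Cpz by simp
  ultimately have symz: "sym_mat z"
    using symC by (simp add: sym_mat_diff)
  have "z \<noteq> 0"
  proof
    assume "z = 0"
    then have "C \<in> W" using Cpz p \<open>span (range A) \<subseteq> W\<close> by auto
    with C_not_span show False by (auto simp: W_def)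
  qed
  have "A i \<bullet> z = 0" for i
    using orth[OF span_base[OF rangeI[of A i]]] by (simp add: orthogonal_def inner_commute)
  then have "Amap A z = 0"
    by (simp add: vec_eq_iff Amap_eq_inner[OF symA])
  moreover have "p \<bullet> z = 0"
    using orth[OF p] by (simp add: orthogonal_def inner_commute)
  then have "trace (C ** z) = z \<bullet> z"
    using symC by (simp add: trace_sym_mult_eq_inner Cpz inner_add_left)
  ultimately show ?thesis
    using that symz \<open>z \<noteq> 0\<close> by simp
qed

lemma conic_recession_margin:
  fixes C :: "real^'n^'n" and A :: "'m::finite \<Rightarrow> real^'n^'n" and K :: "(real^'n^'n) set"
  assumes clK: "closed K"
    and rec: "\<And>D. D \<in> K \<Longrightarrow> Amap A D = 0 \<Longrightarrow> D \<noteq> 0 \<Longrightarrow> 0 < trace (C ** D)"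
  obtains \<mu> where "\<mu> > 0"
    "\<And>D. D \<in> K \<Longrightarrow> norm D = 1 \<Longrightarrow> \<mu> \<le> norm (Amap A D) + max 0 (trace (C ** D))"
proof (cases "K \<inter> sphere 0 1 = {}")
  case True
  show ?thesis by (rule that[of 1]) (use True in auto)
next
  case False
  define h where "h D = norm (Amap A D) + max 0 (trace (C ** D))" for D
  have "compact (K \<inter> sphere 0 1)" using clK by (simp add: closed_Int_compact)
  moreover have "continuous_on (K \<inter> sphere 0 1) h"
    unfolding h_def by (intro continuous_intros continuous_on_Amap continuous_on_trace_mult)
  ultimately obtain D0 where D0: "D0 \<in> K \<inter> sphere 0 1"
    and D0min: "\<And>D. D \<in> K \<inter> sphere 0 1 \<Longrightarrow> h D0 \<le> h D"
    using continuous_attains_inf[OF _ False] by blast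
  have "h D0 > 0"
  proof (cases "Amap A D0 = 0")
    case True
    moreover have "D0 \<noteq> 0" using D0 by force
    ultimately have "0 < trace (C ** D0)" using rec[of D0] D0 by blast
    then show ?thesis by (simp add: h_def add_nonneg_pos)
  next
    case False
    then show ?thesis unfolding h_def by (simp add: add_pos_nonneg)
  qed
  then show ?thesis using that[of "h D0"] D0min by (auto simp: h_def)
qed

lemma conic_sublevel_bounded:
  fixes C :: "real^'n^'n" and A :: "'m::finite \<Rightarrow> real^'n^'n" and K :: "(real^'n^'n) set"
  assumes clK: "closed K" and coneK: "\<And>Y c. Y \<in> K \<Longrightarrow> c > 0 \<Longrightarrow> c *\<^sub>R Y \<in> K"
    and rec: "\<And>D. D \<in> K \<Longrightarrow> Amap A D = 0 \<Longrightarrow> D \<noteq> 0 \<Longrightarrow> 0 < trace (C ** D)"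
  shows "bounded {Y \<in> K. Amap A Y = b \<and> trace (C ** Y) \<le> r}"
proof -
  obtain \<mu> where \<mu>: "\<mu> > 0"
    "\<And>D. D \<in> K \<Longrightarrow> norm D = 1 \<Longrightarrow> \<mu> \<le> norm (Amap A D) + max 0 (trace (C ** D))"
    using conic_recession_margin[OF clK rec] by blast
  have "norm Y \<le> (norm b + max 0 r) / \<mu>"
    if Y: "Y \<in> K" "Amap A Y = b" "trace (C ** Y) \<le> r" for Y
  proof (cases "Y = 0")
    case False
    let ?c = "1 / norm Y"
    have "\<mu> \<le> norm (Amap A (?c *\<^sub>R Y)) + max 0 (trace (C ** (?c *\<^sub>R Y)))"
      using \<mu>(2) coneK[OF Y(1), of ?c] False by simp
    also have "\<dots> = ?c * (norm b + max 0 (trace (C ** Y)))"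
      using False Y(2)
      by (simp add: linear_cmul[OF linear_Amap] matrix_scalar_ac scalar_matrix_assoc[symmetric]
          trace_scaleR max_divide_distrib_right add_divide_distrib)
    also have "\<dots> \<le> ?c * (norm b + max 0 r)"
      using Y(3) by (intro mult_left_mono) auto
    finally show ?thesis
      using False \<mu>(1) by (simp add: field_simps)
  qed (use \<mu>(1) in simp)
  then show ?thesis by (auto simp: bounded_iff)
qed

lemma conic_program_has_minimizer:
  fixes C :: "real^'n^'n" and A :: "'m::finite \<Rightarrow> real^'n^'n" and K :: "(real^'n^'n) set"
  assumes clK: "closed K" and coneK: "\<And>Y c. Y \<in> K \<Longrightarrow> c > 0 \<Longrightarrow> c *\<^sub>R Y \<in> K"
    and rec: "\<And>D. D \<in> K \<Longrightarrow> Amap A D = 0 \<Longrightarrow> D \<noteq> 0 \<Longrightarrow> 0 < trace (C ** D)"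
    and Y0: "Y0 \<in> K" "Amap A Y0 = b"
  obtains Y where "Y \<in> K" "Amap A Y = b"
    "\<And>Z. Z \<in> K \<Longrightarrow> Amap A Z = b \<Longrightarrow> trace (C ** Y) \<le> trace (C ** Z)"
proof -
  define L where "L = {Y \<in> K. Amap A Y = b \<and> trace (C ** Y) \<le> trace (C ** Y0)}"
  have "L = K \<inter> {Y. Amap A Y = b} \<inter> {Y. trace (C ** Y) \<le> trace (C ** Y0)}"
    by (auto simp: L_def)
  moreover have "closed {Y. Amap A Y = b}"
    by (rule closed_Collect_eq) (auto intro: continuous_on_Amap continuous_intros)
  moreover have "closed {Y. trace (C ** Y) \<le> trace (C ** Y0)}"
    by (rule closed_Collect_le) (auto intro: continuous_on_trace_mult continuous_intros)
  ultimately have "closed L" using clK by (simp add: closed_Int)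
  moreover have "bounded L"
    unfolding L_def by (rule conic_sublevel_bounded[OF clK coneK rec])
  ultimately have "compact L" by (simp add: compact_eq_bounded_closed)
  moreover have "L \<noteq> {}" using Y0 by (auto simp: L_def)
  ultimately obtain Y where Y: "Y \<in> L" and Ymin: "\<And>Z. Z \<in> L \<Longrightarrow> trace (C ** Y) \<le> trace (C ** Z)"
    using continuous_attains_inf[of L "\<lambda>Y. trace (C ** Y)"] continuous_on_trace_mult by metis
  show ?thesis
  proof (rule that)
    show "Y \<in> K" "Amap A Y = b" using Y by (auto simp: L_def)
    fix Z assume Z: "Z \<in> K" "Amap A Z = b"
    show "trace (C ** Y) \<le> trace (C ** Z)"
    proof (cases "trace (C ** Z) \<le> trace (C ** Y0)")
      case True
      with Z have "Z \<in> L" by (simp add: L_def)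
      then show ?thesis by (rule Ymin)
    next
      case False
      with Y show ?thesis by (simp add: L_def)
    qed
  qed
qed

lemma dual_slack_cost_pos:
  fixes C S D B :: "real^'n^'n" and A :: "'m::finite \<Rightarrow> real^'n^'n" and y :: "real^'m"
  assumes symC: "sym_mat C" and symA: "\<And>i. sym_mat (A i)"
    and S: "pos_def S" and dual: "(\<Sum>i\<in>UNIV. y $ i *\<^sub>R A i) + S = C"
    and AD: "Amap A D = 0" and D: "D = c *\<^sub>R (B ** transpose B)" "c > 0" "B \<noteq> 0"
  shows "0 < trace (C ** D)"
proof -
  have "trace (C ** D) = (\<Sum>i\<in>UNIV. y $ i * (A i \<bullet> D)) + S \<bullet> D"
    using symC by (simp add: trace_sym_mult_eq_inner dual[symmetric] inner_add_left inner_sum_left)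
  also have "\<dots> = trace (S ** D)"
  proof -
    have "A i \<bullet> D = 0" for i
      using AD Amap_eq_inner[of A i D] symA[of i] by (simp add: vec_eq_iff)
    then show ?thesis
      using pos_def_sym_mat[OF S] by (simp add: trace_sym_mult_eq_inner)
  qed
  also have "\<dots> = c * trace (transpose B ** S ** B)"
    using trace_mul_sym[of "S ** B" "transpose B"]
    by (simp add: D matrix_scalar_ac scalar_matrix_assoc[symmetric] trace_scaleR matrix_mul_assoc)
  finally show ?thesis
    using pos_def_trace_congruence_pos[OF S D(3)] D(2) by simp
qed

lemma Swath_memI:
  fixes E C :: "real^'n^'n" and A :: "'m::finite \<Rightarrow> real^'n^'n"
  assumes E: "pos_def E" "Amap A E = b" and "\<alpha> \<le> 1"
    and rec: "\<And>D. D \<in> coneK E \<alpha> \<Longrightarrow> Amap A D = 0 \<Longrightarrow> D \<noteq> 0 \<Longrightarrow> 0 < trace (C ** D)"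
  shows "E \<in> Swath C A b \<alpha>"
proof -
  have "E \<in> coneK E \<alpha>"
    using E pos_def_sym_mat pos_def_invertible \<open>\<alpha> \<le> 1\<close> by (blast intro: self_mem_coneK)
  then obtain X where "X \<in> coneK E \<alpha>" "Amap A X = b"
    "\<And>Z. Z \<in> coneK E \<alpha> \<Longrightarrow> Amap A Z = b \<Longrightarrow> trace (C ** X) \<le> trace (C ** Z)"
    using conic_program_has_minimizer[OF closed_coneK coneK_scaleR rec _ E(2)] by blast
  then have "QP_optimal C A b E \<alpha> X"
    by (auto simp: QP_optimal_def QP_feasible_def)
  with E show ?thesis by (auto simp: Swath_def)
qed

section \<open>The step from E to E(t)\<close>

lemma trace_norm_cone_ascent:
  fixes X W :: "real^'n^'n"
  assumes \<alpha>: "\<alpha> > 0" and X: "\<alpha> * norm X \<le> trace X"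
    and dir: "\<alpha> * (X \<bullet> W) < norm X * trace W"
  obtains s where "s > 0" "\<alpha> * norm (X + s *\<^sub>R W) \<le> trace (X + s *\<^sub>R W)"
proof -
  define x a q where "x = norm X" and "a = trace W" and "q = a\<^sup>2 - \<alpha>\<^sup>2 * (W \<bullet> W)"
  define k where "k = x * a - \<alpha> * (X \<bullet> W)"
  have k: "k > 0" using dir by (simp add: k_def x_def a_def)
  have "X \<noteq> 0" using dir by auto
  then have "x > 0" by (simp add: x_def)
  define s where "s = min (\<alpha> * x / (\<bar>a\<bar> + 1)) (\<alpha> * k / (\<bar>q\<bar> + 1))"
  have s: "s > 0" using \<alpha> k \<open>x > 0\<close> by (simp add: s_def)
  have "s \<le> \<alpha> * x / (\<bar>a\<bar> + 1)" "s \<le> \<alpha> * k / (\<bar>q\<bar> + 1)"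
    by (simp_all add: s_def)
  then have "s * (\<bar>a\<bar> + 1) \<le> \<alpha> * x" "s * (\<bar>q\<bar> + 1) \<le> \<alpha> * k"
    by (simp_all add: pos_le_divide_eq add_nonneg_pos)
  moreover have "s * (- \<bar>a\<bar>) \<le> s * a" "s * (- \<bar>q\<bar>) \<le> s * q"
    using s by (intro mult_left_mono; simp)+
  moreover have "\<alpha> * k > 0" using \<alpha> k by simp
  ultimately have lin: "0 \<le> \<alpha> * x + s * a" and quad: "0 \<le> 2 * \<alpha> * k + s * q"
    using s by (simp_all add: algebra_simps)
  have "(norm (X + s *\<^sub>R W))\<^sup>2 = x\<^sup>2 + 2 * s * (X \<bullet> W) + s\<^sup>2 * (W \<bullet> W)"
    unfolding power2_norm_eq_inner x_def
    by (simp add: inner_add_left inner_add_right inner_commute[of W X] power2_eq_square algebra_simps)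
  then have "(\<alpha> * x + s * a)\<^sup>2 - (\<alpha> * norm (X + s *\<^sub>R W))\<^sup>2 = s * (2 * \<alpha> * k + s * q)"
    by (simp add: power_mult_distrib k_def q_def power2_eq_square algebra_simps)
  with s quad have "(\<alpha> * norm (X + s *\<^sub>R W))\<^sup>2 \<le> (\<alpha> * x + s * a)\<^sup>2"
    by (metis diff_ge_0_iff_ge zero_le_mult_iff less_imp_le)
  then have "\<alpha> * norm (X + s *\<^sub>R W) \<le> \<alpha> * x + s * a"
    using lin by (rule power2_le_imp_le)
  also have "\<dots> \<le> trace (X + s *\<^sub>R W)"
    using X by (simp add: trace_add trace_scaleR x_def a_def)
  finally show ?thesis using that s by blast
qed

lemma id_plus_square_identities:
  fixes Q :: "real^'n^'n"
  defines "Y \<equiv> Q + 2 *\<^sub>R (Q ** Q)"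
  shows "(mat 1 + Q) ** Y = Y ** (mat 1 + Q)" "(mat 1 - 2 *\<^sub>R Q) ** (mat 1 + Q) = mat 1 - Y"
proof -
  show "(mat 1 + Q) ** Y = Y ** (mat 1 + Q)"
    by (simp add: Y_def matrix_add_ldistrib matrix_add_rdistrib matrix_scalar_ac
        scalar_matrix_assoc[symmetric] matrix_mul_assoc scaleR_add_right)
  have "Q * 2 = 2 *\<^sub>R Q" by (simp add: vec_eq_iff)
  then show "(mat 1 - 2 *\<^sub>R Q) ** (mat 1 + Q) = mat 1 - Y"
    by (simp add: Y_def matrix_diff_rdistrib matrix_add_ldistrib scalar_matrix_assoc[symmetric]
        algebra_simps)
qed

text \<open>In the coordinates \<open>H = T\<^sup>-\<^sup>1\<^sup>/\<^sup>2 D T\<^sup>-\<^sup>1\<^sup>/\<^sup>2\<close> with \<open>T = I + Q\<close>, the cone becomes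
  \<open>K\<^sub>I(\<alpha>)\<close> and the functional \<open>D \<mapsto> tr D - 2\<langle>Q, D\<rangle>\<close> becomes \<open>tr H - \<langle>Z, H\<rangle>\<close>, where
  \<open>Z = T\<^sup>-\<^sup>1\<^sup>/\<^sup>2 (T Y) T\<^sup>-\<^sup>1\<^sup>/\<^sup>2\<close> and \<open>Y = Q + 2Q\<^sup>2\<close>, because \<open>(I - 2Q)(I + Q) = I - Y\<close>.\<close>

lemma id_plus_cone_coordinates:
  fixes Q D :: "real^'n^'n"
  assumes symQ: "sym_mat Q" and nQ: "norm Q < 1" and D: "D \<in> coneK (mat 1 + Q) \<alpha>"
  defines "Y \<equiv> Q + 2 *\<^sub>R (Q ** Q)"
  obtains H Z :: "real^'n^'n" where "\<alpha> * norm H \<le> trace H" "trace D - 2 * (Q \<bullet> D) = trace H - Z \<bullet> H"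
    "norm Z = norm Y" "H = 0 \<Longrightarrow> D = 0" "\<And>c. H = c *\<^sub>R Z \<Longrightarrow> D = c *\<^sub>R ((mat 1 + Q) ** Y)"
proof -
  define T where "T = mat 1 + Q"
  have pdT: "pos_def T" unfolding T_def using symQ nQ by (rule pos_def_id_plus)
  obtain Sq Si where Sq: "sym_mat Sq" "sym_mat Si" "Sq ** Sq = T" "Sq ** Si = mat 1" "Si ** Sq = mat 1"
    using pos_def_sqrt[OF pdT] by blast
  have Ti: "matrix_inv T = Si ** Si" using matrix_inv_sqrt[OF Sq(4)] Sq(3) by simp
  note uncoord = congruence_cancel[OF Sq(5,4)]
  define H where "H = Si ** D ** Si"
  define Z where "Z = Si ** (T ** Y) ** Si"
  have symD: "sym_mat D" using D by (simp add: coneK_def)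
  have "D \<in> coneK (Sq ** mat 1 ** Sq) \<alpha>" using D Sq(3) by (simp add: T_def)
  then have "H \<in> coneK (mat 1) \<alpha>"
    unfolding H_def using coneK_congruence[OF Sq(2,1,5,4) invertible_mat_1] by simp
  then have cone: "\<alpha> * norm H \<le> trace H" by (simp add: coneK_mat_1)
  have "sym_mat (Q ** Q)" using symQ by (simp add: sym_mat_def matrix_transpose_mul)
  then have symY: "sym_mat Y" using symQ unfolding Y_def by (intro sym_mat_add sym_mat_scaleR)
  have "T ** Y = Y ** T" using id_plus_square_identities(1) by (simp add: T_def Y_def)
  then have symTY: "sym_mat (T ** Y)"
    using symY pos_def_sym_mat[OF pdT] by (simp add: sym_mat_def matrix_transpose_mul)
  have TiTY: "matrix_inv T ** (T ** Y) = Y"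
    by (simp add: matrix_mul_assoc matrix_inv_left[OF pos_def_invertible[OF pdT]])
  have "(mat 1 - 2 *\<^sub>R Q) ** T = mat 1 - Y"
    using id_plus_square_identities(2) by (simp add: T_def Y_def)
  then have "mat 1 - 2 *\<^sub>R Q = (mat 1 - Y) ** matrix_inv T"
    by (metis matrix_mul_assoc matrix_mul_rid matrix_inv_right[OF pos_def_invertible[OF pdT]])
  then have IQ: "mat 1 - 2 *\<^sub>R Q = matrix_inv T - Y ** matrix_inv T"
    by (simp add: matrix_diff_rdistrib)
  have "trace D - 2 * (Q \<bullet> D) = trace ((mat 1 - 2 *\<^sub>R Q) ** D)"
    using symQ by (simp add: matrix_diff_rdistrib trace_sub scalar_matrix_assoc[symmetric] trace_scaleR
        trace_sym_mult_eq_inner)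
  also have "\<dots> = trace (matrix_inv T ** D) - trace (Y ** matrix_inv T ** D)"
    by (simp add: IQ matrix_diff_rdistrib trace_sub)
  also have "trace (matrix_inv T ** D) = trace H"
    using trace_mul_sym[of Si "Si ** D"] by (simp add: Ti H_def matrix_mul_assoc)
  also have "trace (Y ** matrix_inv T ** D) = Z \<bullet> H"
    using trace_congruence_inner[OF Sq(2) symTY symD] TiTY by (simp add: Ti Z_def H_def matrix_mul_assoc)
  finally have gap: "trace D - 2 * (Q \<bullet> D) = trace H - Z \<bullet> H" .
  have "(norm Z)\<^sup>2 = (norm Y)\<^sup>2"
    using trace_congruence_inner[OF Sq(2) symTY symTY] TiTY symY
    by (simp add: power2_norm_eq_inner Z_def Ti[symmetric] trace_sym_mult_eq_inner)
  then have nZ: "norm Z = norm Y" by simp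
  have H0: "H = 0 \<Longrightarrow> D = 0" using uncoord[of D] by (simp add: H_def)
  have Hc: "D = c *\<^sub>R (T ** Y)" if "H = c *\<^sub>R Z" for c
    using uncoord[of D] uncoord[of "T ** Y"] that
    by (simp add: H_def Z_def matrix_scalar_ac scalar_matrix_assoc[symmetric])
  show ?thesis
    using that[of H Z] cone gap nZ H0 Hc unfolding T_def by blast
qed

lemma id_plus_rank_one_square:
  fixes Q :: "real^'n^'n"
  assumes "Q ** Q = \<tau> *\<^sub>R Q"
  shows "(mat 1 + Q) ** (Q + 2 *\<^sub>R (Q ** Q)) = ((1 + \<tau>) * (1 + 2 * \<tau>)) *\<^sub>R Q"
  using assms
  by (simp add: matrix_add_ldistrib matrix_add_rdistrib matrix_scalar_ac scalar_matrix_assoc[symmetric]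
      matrix_mul_assoc[symmetric] algebra_simps)
    (simp add: scaleR_left_distrib[symmetric])

text \<open>By Cauchy-Schwarz, \<open>tr D - 2\<langle>Q, D\<rangle> \<ge> (\<alpha> - \<parallel>Q + 2Q\<^sup>2\<parallel>) \<parallel>H\<parallel>\<close> with
  \<open>\<parallel>Q + 2Q\<^sup>2\<parallel> \<le> \<alpha>/2 + \<alpha>\<^sup>2/2 \<le> \<alpha>\<close>; equality throughout forces \<open>\<alpha> = 1\<close>, \<open>Q\<close> of rank one and
  \<open>H\<close> parallel to \<open>Z\<close>.\<close>

lemma coneK_id_plus_dichotomy:
  fixes Q D :: "real^'n^'n"
  assumes symQ: "sym_mat Q" and nQ: "norm Q = \<alpha> / 2" and trQ: "\<alpha> * norm Q \<le> trace Q"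
    and \<alpha>: "0 < \<alpha>" "\<alpha> \<le> 1" and D: "D \<in> coneK (mat 1 + Q) \<alpha>" "D \<noteq> 0"
  shows "2 * (Q \<bullet> D) < trace D \<or> (\<exists>c>0. D = c *\<^sub>R (Q ** Q))"
proof (cases "2 * (Q \<bullet> D) < trace D")
  case False
  define Y where "Y = Q + 2 *\<^sub>R (Q ** Q)"
  obtain H Z :: "real^'n^'n" where cone: "\<alpha> * norm H \<le> trace H"
    and gap: "trace D - 2 * (Q \<bullet> D) = trace H - Z \<bullet> H" and nZ: "norm Z = norm Y"
    and H0: "H = 0 \<Longrightarrow> D = 0" and HZ: "\<And>c. H = c *\<^sub>R Z \<Longrightarrow> D = c *\<^sub>R ((mat 1 + Q) ** Y)"
    using id_plus_cone_coordinates[OF symQ _ D(1)] nQ \<alpha> unfolding Y_def by auto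
  have nQQ: "norm (Q ** Q) \<le> (norm Q)\<^sup>2"
    using norm_matrix_mult_le[of Q Q] by (simp add: power2_eq_square)
  have nY: "norm Y \<le> norm Q + 2 * norm (Q ** Q)"
    using norm_triangle_ineq[of Q "2 *\<^sub>R (Q ** Q)"] by (simp add: Y_def)
  have "norm H > 0" using H0 D(2) by auto
  have "\<alpha> * norm H \<le> Z \<bullet> H" using cone gap False by linarith
  also have "\<dots> \<le> norm Z * norm H" by (rule norm_cauchy_schwarz)
  finally have "\<alpha> \<le> norm Y" using \<open>norm H > 0\<close> nZ by simp
  then have "\<alpha> * 1 \<le> \<alpha> * \<alpha>"
    using nY nQQ nQ by (simp add: power2_eq_square)
  then have "\<alpha> = 1" using \<alpha> by (simp add: mult_le_cancel_left_pos)
  then have "norm Q = 1 / 2" using nQ by simp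
  then have "(norm Q)\<^sup>2 = 1 / 4" unfolding \<open>norm Q = 1 / 2\<close> by (simp add: power2_eq_square)
  then have nQQ_eq: "norm (Q ** Q) = (norm Q)\<^sup>2"
    using \<open>\<alpha> \<le> norm Y\<close> \<open>\<alpha> = 1\<close> \<open>norm Q = 1 / 2\<close> nY nQQ by linarith
  have QQ: "Q ** Q = trace Q *\<^sub>R Q" by (rule sym_mat_square_eq_trace_scaleR[OF symQ nQQ_eq])
  have "trace Q > 0" using trQ nQ \<open>\<alpha> = 1\<close> by simp
  have "Z \<bullet> H = norm Z * norm H" "norm Z = 1"
    using cone gap False norm_cauchy_schwarz[of Z H] \<open>\<alpha> \<le> norm Y\<close> nY nQQ_eq nQ \<open>\<alpha> = 1\<close> nZ
    by (simp_all add: power2_eq_square)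
  then have "H = norm H *\<^sub>R Z" by (metis norm_cauchy_schwarz_eq scaleR_one)
  then have "D = norm H *\<^sub>R (((1 + trace Q) * (1 + 2 * trace Q)) *\<^sub>R Q)"
    using HZ id_plus_rank_one_square[OF QQ] by (simp add: Y_def)
  also have "\<dots> = (norm H * (1 + trace Q) * (1 + 2 * trace Q) / trace Q) *\<^sub>R (Q ** Q)"
    using \<open>trace Q > 0\<close> by (simp add: QQ)
  finally have "\<exists>c>0. D = c *\<^sub>R (Q ** Q)"
    using \<open>norm H > 0\<close> \<open>trace Q > 0\<close> by (metis add_pos_pos divide_pos_pos mult_pos_pos
        mult_2 zero_less_one)
  then show ?thesis ..
qed simp

lemma optimal_ascent_direction_cost_nonneg:
  fixes C X W R Ri :: "real^'n^'n" and A :: "'m::finite \<Rightarrow> real^'n^'n"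
  assumes R: "sym_mat R" "sym_mat Ri" "R ** Ri = mat 1" "Ri ** R = mat 1"
    and X_opt: "QP_optimal C A b (Ri ** Ri) \<alpha> X" and \<alpha>: "\<alpha> > 0"
    and W: "sym_mat W" "Amap A W = 0"
    and dir: "\<alpha> * ((R ** X ** R) \<bullet> (R ** W ** R)) < norm (R ** X ** R) * trace (R ** W ** R)"
  shows "0 \<le> trace (C ** W)"
proof -
  have X: "X \<in> coneK (Ri ** Ri) \<alpha>" "Amap A X = b"
    and opt: "\<And>Y. Y \<in> coneK (Ri ** Ri) \<alpha> \<Longrightarrow> Amap A Y = b \<Longrightarrow> trace (C ** X) \<le> trace (C ** Y)"
    using X_opt by (auto simp: QP_optimal_def QP_feasible_def)
  obtain s where s: "s > 0"
    "\<alpha> * norm (R ** X ** R + s *\<^sub>R (R ** W ** R)) \<le> trace (R ** X ** R + s *\<^sub>R (R ** W ** R))"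
    using trace_norm_cone_ascent[OF \<alpha> _ dir] X(1) coneK_sqrt[OF R] by blast
  have "R ** (X + s *\<^sub>R W) ** R = R ** X ** R + s *\<^sub>R (R ** W ** R)"
    by (simp add: matrix_add_ldistrib matrix_add_rdistrib matrix_scalar_ac scalar_matrix_assoc[symmetric])
  then have "X + s *\<^sub>R W \<in> coneK (Ri ** Ri) \<alpha>"
    using s X(1) W(1) coneK_sqrt[OF R] by (simp add: sym_mat_add sym_mat_scaleR)
  moreover have "Amap A (X + s *\<^sub>R W) = b"
    using X(2) W(2) by (simp add: linear_add[OF linear_Amap] linear_cmul[OF linear_Amap])
  ultimately have "trace (C ** X) \<le> trace (C ** (X + s *\<^sub>R W))" by (rule opt)
  also have "\<dots> = trace (C ** X) + s * trace (C ** W)"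
    by (simp add: matrix_add_ldistrib trace_add matrix_scalar_ac scalar_matrix_assoc[symmetric] trace_scaleR)
  finally have "0 \<le> s * trace (C ** W)" by simp
  then show ?thesis using s(1) by (simp add: zero_le_mult_iff)
qed

lemma optimal_ascent_direction_cost_pos:
  fixes C X D R Ri :: "real^'n^'n" and A :: "'m::finite \<Rightarrow> real^'n^'n"
  assumes symC: "sym_mat C" and symA: "\<And>i. sym_mat (A i)"
    and C_not_span: "\<not> (\<exists>y::real^'m. C = (\<Sum>i\<in>UNIV. y $ i *\<^sub>R A i))"
    and R: "sym_mat R" "sym_mat Ri" "R ** Ri = mat 1" "Ri ** R = mat 1"
    and X_opt: "QP_optimal C A b (Ri ** Ri) \<alpha> X" and \<alpha>: "\<alpha> > 0"
    and D: "sym_mat D" "Amap A D = 0"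
    and dir: "\<alpha> * ((R ** X ** R) \<bullet> (R ** D ** R)) < norm (R ** X ** R) * trace (R ** D ** R)"
  shows "0 < trace (C ** D)"
proof -
  obtain Rc where Rc: "sym_mat Rc" "Amap A Rc = 0" "0 < trace (C ** Rc)"
    using exists_kernel_direction_cost_pos[OF symC symA C_not_span] by blast
  define g where "g W = norm (R ** X ** R) * trace (R ** W ** R) - \<alpha> * ((R ** X ** R) \<bullet> (R ** W ** R))"
    for W
  define \<epsilon> where "\<epsilon> = g D / (2 * (\<bar>g Rc\<bar> + 1))"
  have "g D > 0" using dir by (simp add: g_def)
  then have "\<epsilon> > 0" by (simp add: \<epsilon>_def add_pos_nonneg)
  have "\<epsilon> * \<bar>g Rc\<bar> = (g D / 2) * (\<bar>g Rc\<bar> / (\<bar>g Rc\<bar> + 1))" by (simp add: \<epsilon>_def field_simps)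
  also have "\<dots> \<le> g D / 2" using \<open>g D > 0\<close> by (intro mult_left_le) (auto simp: divide_le_eq)
  finally have "\<epsilon> * g Rc < g D"
    using \<open>g D > 0\<close> \<open>\<epsilon> > 0\<close> mult_left_mono[OF abs_ge_self[of "g Rc"], of \<epsilon>] by linarith
  moreover have "g (D - \<epsilon> *\<^sub>R Rc) = g D - \<epsilon> * g Rc"
    by (simp add: g_def matrix_diff_ldistrib matrix_diff_rdistrib matrix_scalar_ac
        scalar_matrix_assoc[symmetric] trace_sub trace_scaleR inner_diff_right algebra_simps)
  ultimately have "0 < g (D - \<epsilon> *\<^sub>R Rc)" by simp
  moreover have "sym_mat (D - \<epsilon> *\<^sub>R Rc)" "Amap A (D - \<epsilon> *\<^sub>R Rc) = 0"
    using D Rc by (simp_all add: sym_mat_diff sym_mat_scaleR linear_diff[OF linear_Amap]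
        linear_cmul[OF linear_Amap])
  ultimately have "0 \<le> trace (C ** (D - \<epsilon> *\<^sub>R Rc))"
    using optimal_ascent_direction_cost_nonneg[OF R X_opt \<alpha>] by (simp add: g_def)
  then have "\<epsilon> * trace (C ** Rc) \<le> trace (C ** D)"
    by (simp add: matrix_diff_ldistrib trace_sub matrix_scalar_ac scalar_matrix_assoc[symmetric] trace_scaleR)
  moreover have "0 < \<epsilon> * trace (C ** Rc)" using \<open>\<epsilon> > 0\<close> Rc(3) by simp
  ultimately show ?thesis by linarith
qed

lemma swath_step_recession_cost_pos:
  fixes C X R Ri Q D :: "real^'n^'n" and A :: "'m::finite \<Rightarrow> real^'n^'n"
  assumes symC: "sym_mat C" and symA: "\<And>i. sym_mat (A i)"
    and dual_strict: "\<exists>(y::real^'m) S. pos_def S \<and> (\<Sum>i\<in>UNIV. y $ i *\<^sub>R A i) + S = C"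
    and C_not_span: "\<not> (\<exists>y::real^'m. C = (\<Sum>i\<in>UNIV. y $ i *\<^sub>R A i))"
    and \<alpha>: "0 < \<alpha>" "\<alpha> \<le> 1"
    and R: "sym_mat R" "sym_mat Ri" "R ** Ri = mat 1" "Ri ** R = mat 1"
    and X_opt: "QP_optimal C A b (Ri ** Ri) \<alpha> X"
    and Q: "Q = t *\<^sub>R (R ** X ** R)" "t > 0" "norm Q = \<alpha> / 2"
    and D: "D \<in> coneK (Ri ** (mat 1 + Q) ** Ri) \<alpha>" "Amap A D = 0" "D \<noteq> 0"
  shows "0 < trace (C ** D)"
proof -
  define Xt where "Xt = R ** X ** R"
  have Xt: "sym_mat Xt" "\<alpha> * norm Xt \<le> trace Xt"
    using X_opt coneK_sqrt[OF R] sym_mat_congruence[OF R(1)]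
    by (auto simp: Xt_def QP_optimal_def QP_feasible_def)
  have symQ: "sym_mat Q" using Xt(1) by (simp add: Q(1) Xt_def sym_mat_scaleR)
  have trQ: "\<alpha> * norm Q \<le> trace Q"
    using Xt(2) Q(2) by (simp add: Q(1) Xt_def[symmetric] trace_scaleR mult.left_commute)
  have "pos_def (mat 1 + Q)" using symQ Q(3) \<alpha> by (intro pos_def_id_plus) auto
  then have Dt: "R ** D ** R \<in> coneK (mat 1 + Q) \<alpha>"
    using D(1) coneK_congruence[OF R pos_def_invertible] by blast
  have "R ** D ** R \<noteq> 0" using D(3) congruence_cancel[OF R(3,4), of D] by auto
  from coneK_id_plus_dichotomy[OF symQ Q(3) trQ \<alpha> Dt this] show ?thesis
  proof
    assume "2 * (Q \<bullet> (R ** D ** R)) < trace (R ** D ** R)"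
    moreover have "\<alpha> = 2 * t * norm Xt" using Q by (simp add: Xt_def)
    moreover have "norm Xt > 0" using Q \<alpha>(1) by (auto simp: Xt_def)
    ultimately have "\<alpha> * (Xt \<bullet> (R ** D ** R)) < norm Xt * trace (R ** D ** R)"
      by (simp add: Q(1) Xt_def[symmetric] mult.assoc[symmetric])
    then show ?thesis
      using optimal_ascent_direction_cost_pos[OF symC symA C_not_span R X_opt \<alpha>(1)] D(1,2)
      by (simp add: Xt_def coneK_def)
  next
    assume "\<exists>c>0. R ** D ** R = c *\<^sub>R (Q ** Q)"
    then obtain c where "c > 0" and "R ** D ** R = c *\<^sub>R (Q ** Q)" by blast
    then have "D = c *\<^sub>R ((Ri ** Q) ** transpose (Ri ** Q))"
      using congruence_cancel[OF R(3,4), of D] symQ R(2)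
      by (simp add: sym_mat_def matrix_transpose_mul matrix_scalar_ac scalar_matrix_assoc[symmetric]
          matrix_mul_assoc)
    moreover have "Q = R ** (Ri ** Q)" by (simp add: matrix_mul_assoc R(3))
    then have "Ri ** Q \<noteq> 0" using Q(3) \<alpha>(1) by auto
    moreover obtain y S where "pos_def S" "(\<Sum>i\<in>UNIV. y $ i *\<^sub>R A i) + S = C"
      using dual_strict by blast
    ultimately show ?thesis
      using dual_slack_cost_pos[OF symC symA _ _ D(2)] \<open>c > 0\<close> by blast
  qed
qed

lemma Amap_normalized_step:
  assumes "Amap A E = b" "Amap A X = b" "1 + t \<noteq> 0"
  shows "Amap A ((1 / (1 + t)) *\<^sub>R (E + t *\<^sub>R X)) = b"
proof -
  have "Amap A ((1 / (1 + t)) *\<^sub>R (E + t *\<^sub>R X)) = (1 / (1 + t)) *\<^sub>R ((1 + t) *\<^sub>R b)"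
    using assms(1,2) by (simp add: linear_add[OF linear_Amap] linear_cmul[OF linear_Amap] scaleR_add_left)
  then show ?thesis
    using assms(3) by (simp del: scaleR_add_left)
qed

lemma swath_step_coordinates:
  fixes E X R Ri :: "real^'n^'n"
  assumes R: "sym_mat R" "sym_mat Ri" "R ** Ri = mat 1" "Ri ** R = mat 1" and Ri: "Ri ** Ri = E"
    and X: "X \<in> coneK E \<alpha>" "X \<noteq> 0" and \<alpha>: "0 < \<alpha>" "\<alpha> \<le> 1"
    and t: "t = (\<alpha> / 2) / normE E X"
  defines "Q \<equiv> t *\<^sub>R (R ** X ** R)"
  shows "t > 0" "norm Q = \<alpha> / 2" "pos_def (Ri ** (mat 1 + Q) ** Ri)"
    "E + t *\<^sub>R X = Ri ** (mat 1 + Q) ** Ri"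
proof -
  have "R ** X ** R \<noteq> 0"
    using X(2) congruence_cancel[OF R(3,4), of X] by auto
  moreover have "normE E X = norm (R ** X ** R)"
    using normE_congruence[OF R(3,4) invertible_mat_1, of X] X(1) R(1) Ri
    by (simp add: normE_mat_1 sym_mat_congruence coneK_def)
  ultimately show "t > 0" and nQ: "norm Q = \<alpha> / 2"
    using t \<alpha> by (auto simp: Q_def)
  have "pos_def (mat 1 + Q)"
    using X(1) R(1) nQ \<alpha> by (intro pos_def_id_plus) (auto simp: Q_def coneK_def sym_mat_scaleR sym_mat_congruence)
  moreover have "invertible Ri" using R(3,4) by (auto simp: invertible_def)
  ultimately show "pos_def (Ri ** (mat 1 + Q) ** Ri)" using R(2) by (intro pos_def_congruence)
  show "E + t *\<^sub>R X = Ri ** (mat 1 + Q) ** Ri"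
    using congruence_cancel[OF R(3,4), of X]
    by (simp add: Q_def Ri matrix_add_ldistrib matrix_add_rdistrib matrix_scalar_ac
        scalar_matrix_assoc[symmetric])
qed

theorem proposition2p4:
  fixes C :: "real^'n^'n" and A :: "'m::finite \<Rightarrow> real^'n^'n" and b :: "real^'m"
    and \<alpha> :: real and E X :: "real^'n^'n" and t :: real
  assumes symC: "sym_mat C"
    and symA: "\<And>i. sym_mat (A i)"
    and primal_strict: "\<exists>X0. pos_def X0 \<and> Amap A X0 = b"
    and dual_strict: "\<exists>(y::real^'m) S. pos_def S \<and> (\<Sum>i\<in>UNIV. y $ i *\<^sub>R A i) + S = C"
    and b_nz: "b \<noteq> 0"
    and C_not_span: "\<not> (\<exists>y::real^'m. C = (\<Sum>i\<in>UNIV. y $ i *\<^sub>R A i))"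
    and A_indep: "\<And>c::'m \<Rightarrow> real. (\<Sum>i\<in>UNIV. c i *\<^sub>R A i) = 0 \<Longrightarrow> (\<forall>i. c i = 0)"
    and alpha: "0 < \<alpha>" "\<alpha> \<le> 1"
    and E_swath: "E \<in> Swath C A b \<alpha>"
    and X_opt: "QP_optimal C A b E \<alpha> X"
    and t_def: "t = (\<alpha> / 2) / normE E X"
  shows "(1 / (1 + t)) *\<^sub>R (E + t *\<^sub>R X) \<in> Swath C A b \<alpha>"
proof -
  have E: "pos_def E" "Amap A E = b" using E_swath by (auto simp: Swath_def)
  have X: "X \<in> coneK E \<alpha>" "Amap A X = b" using X_opt by (auto simp: QP_optimal_def QP_feasible_def)
  then have "X \<noteq> 0" using b_nz linear_0[OF linear_Amap] by auto
  obtain Ri R where Ri: "Ri ** Ri = E" and R: "sym_mat R" "sym_mat Ri" "R ** Ri = mat 1" "Ri ** R = mat 1"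
    using pos_def_sqrt[OF E(1)] by metis
  define Q where "Q = t *\<^sub>R (R ** X ** R)"
  note step = swath_step_coordinates[OF R Ri X(1) \<open>X \<noteq> 0\<close> alpha t_def, folded Q_def]
  have E': "(1 / (1 + t)) *\<^sub>R (E + t *\<^sub>R X) = (1 / (1 + t)) *\<^sub>R (Ri ** (mat 1 + Q) ** Ri)"
    using step(4) by simp
  show ?thesis
  proof (rule Swath_memI)
    show "pos_def ((1 / (1 + t)) *\<^sub>R (E + t *\<^sub>R X))"
      unfolding E' using step(1,3) by (intro pos_def_scaleR) simp_all
    show "Amap A ((1 / (1 + t)) *\<^sub>R (E + t *\<^sub>R X)) = b"
      using E(2) X(2) step(1) by (intro Amap_normalized_step) simp_all
    fix D assume D: "D \<in> coneK ((1 / (1 + t)) *\<^sub>R (E + t *\<^sub>R X)) \<alpha>" "Amap A D = 0" "D \<noteq> 0"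
    then have "D \<in> coneK (Ri ** (mat 1 + Q) ** Ri) \<alpha>"
      using coneK_scaleR_left[OF pos_def_invertible[OF step(3)], of "1 / (1 + t)"] step(1) by (simp add: E')
    with X_opt Ri show "0 < trace (C ** D)"
      using swath_step_recession_cost_pos[OF symC symA dual_strict C_not_span alpha R _ Q_def step(1,2) _ D(2,3)]
      by simp
  qed (use alpha in simp)
qed

end
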